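(* Let $B^H$ be a fractional Brownian motion with Hurst index $H\in(0,1)$. Then almost surely, for every continuous and bounded $\varphi:\mathbb R\to\mathbb R$, $$\frac1{\log n}\sum_{k=1}^{n}\frac1k\,\varphi\big(B^H_k/k^H\big)\longrightarrow E[\varphi(N)]\quad\text{as }n\to\infty,$$ where $N\sim\mathscr N(0,1)$.
   Context: A fractional Brownian motion with Hurst index $H\in(0,1)$ is a centered Gaussian process $(B^H_t)_{t\ge0}$ with continuous paths and covariance $E[B^H_tB^H_s]=\frac12(t^{2H}+s^{2H}-|t-s|^{2H})$. *)

theory Defs
  imports "HOL-Probability.Probability"
begin

definition gaussian_rv :: "'a measure \<Rightarrow> ('a \<Rightarrow> real) \<Rightarrow> bool" where
  "gaussian_rv M X \<longleftrightarrow>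
     (\<exists>\<mu> \<sigma>. 0 < \<sigma> \<and> distributed M lborel X (normal_density \<mu> \<sigma>))
   \<or> (\<exists>c. X \<in> borel_measurable M \<and> (AE \<omega> in M. X \<omega> = c))"

definition centered_gaussian_process :: "'a measure \<Rightarrow> (real \<Rightarrow> 'a \<Rightarrow> real) \<Rightarrow> bool" where
  "centered_gaussian_process M B \<longleftrightarrow>
     prob_space M
   \<and> (\<forall>t\<ge>0. B t \<in> borel_measurable M)
   \<and> (\<forall>I c. finite I \<longrightarrow> I \<subseteq> {0..} \<longrightarrow> gaussian_rv M (\<lambda>\<omega>. \<Sum>t\<in>I. c t * B t \<omega>))
   \<and> (\<forall>t\<ge>0. integrable M (B t) \<and> integral\<^sup>L M (B t) = 0)"

definition fbm :: "'a measure \<Rightarrow> real \<Rightarrow> (real \<Rightarrow> 'a \<Rightarrow> real) \<Rightarrow> bool" where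
  "fbm M H B \<longleftrightarrow>
     0 < H \<and> H < 1
   \<and> centered_gaussian_process M B
   \<and> (\<forall>\<omega>\<in>space M. continuous_on {0..} (\<lambda>t. B t \<omega>))
   \<and> (\<forall>t\<ge>0. \<forall>s\<ge>0. integral\<^sup>L M (\<lambda>\<omega>. B t \<omega> * B s \<omega>)
          = (t powr (2*H) + s powr (2*H) - \<bar>t - s\<bar> powr (2*H)) / 2)"

end

theory Submission
  imports Defs "HOL-Real_Asymp.Real_Asymp"
begin

(* Put X k = B k / k^H.  Each X k is standard normal and, by self-similarity, the correlation
   of X j and X k lies between 0 and 2 * (min j k / max j k) powr g, where g = min H (1 - H).

   1. A general almost sure law of large numbers for logarithmic averages
      (1 / ln n) * (SUM k=1..n. Y k / k) of nonnegative variables with a common mean whose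
      covariances decay like (min j k / max j k) powr g: the weighted sums have variance O(ln n),
      so Chebyshev's inequality and Borel-Cantelli give convergence along n = 2 ^ (m + 1)^4,
      and monotonicity of the partial sums interpolates.
   2. Applied to Y k = 1 + cos (t * X k + theta) and to Y k = X k ^ 2, whose covariances follow
      from Gaussian identities, this gives almost surely the limits of the logarithmic averages
      of cos (t * X k), sin (t * X k) for all rational t, and of X k ^ 2.
   3. A deterministic step: along such a path the characteristic functions of the weighted
      empirical measures converge on the rationals and are equi-Lipschitz (by the second
      moments), hence converge everywhere; Levy's continuity theorem then yields the limit
      E phi(N) simultaneously for every bounded continuous phi. *)

subsection \<open>Elementary inequalities for real powers\<close>

lemma powr_le_tangent:
  fixes a s :: real assumes "0 < a" "a \<le> 1" "0 < s"
  shows "s powr a \<le> a * s + (1 - a)"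
  using Youngs_inequality_0[of a "1-a" s 1] assms by simp

text \<open>Bernoulli's inequality for real exponents \<open>a \<ge> 1\<close> (convexity), obtained by inverting
  the previous inequality.\<close>
lemma tangent_le_powr:
  fixes a s :: real assumes "1 \<le> a" "0 \<le> s"
  shows "1 + a * (s - 1) \<le> s powr a"
proof (cases "s = 0")
  case True then show ?thesis using assms by simp
next
  case False
  then have s: "0 < s" using assms by simp
  have "(s powr a) powr (1/a) \<le> (1/a) * s powr a + (1 - 1/a)"
    using powr_le_tangent[of "1/a" "s powr a"] assms s by simp
  moreover have "(s powr a) powr (1/a) = s" using assms s by (simp add: powr_powr)
  ultimately have "a * s \<le> a * ((1/a) * s powr a + (1 - 1/a))" using assms by simp
  also have "\<dots> = s powr a + a - 1" using assms by (simp add: algebra_simps)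
  finally show ?thesis by (simp add: algebra_simps)
qed

lemma powr_subadditive:
  fixes a u v :: real assumes "0 < a" "a \<le> 1" "0 \<le> u" "0 \<le> v"
  shows "(u + v) powr a \<le> u powr a + v powr a"
proof (cases "u + v = 0")
  case True then show ?thesis using assms by simp
next
  case False
  define w where "w = u + v"
  have w: "0 < w" using False assms w_def by simp
  have "u / w \<le> (u / w) powr a" "v / w \<le> (v / w) powr a"
    using powr_mono'[of a 1 "u/w"] powr_mono'[of a 1 "v/w"] assms w w_def
    by (simp_all add: divide_le_eq_1)
  moreover have "u / w + v / w = 1" using w by (simp add: w_def add_divide_distrib[symmetric])
  ultimately have "1 \<le> (u/w) powr a + (v/w) powr a" by linarith
  also have "\<dots> = (u powr a + v powr a) / w powr a"
    using assms w by (simp add: powr_divide add_divide_distrib)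
  finally show ?thesis using w by (simp add: le_divide_eq w_def)
qed

text \<open>Integral comparison for the partial sums of \<open>j powr (g - 1)\<close>, proved by a telescoping
  application of concavity.\<close>
lemma sum_powr_le:
  fixes g :: real assumes g: "0 < g" "g \<le> 1"
  shows "(\<Sum>j=1..n. real j powr (g - 1)) \<le> real n powr g / g"
proof (induction n)
  case 0 then show ?case by simp
next
  case (Suc n)
  have step: "g * real (Suc n) powr (g - 1) \<le> real (Suc n) powr g - real n powr g"
  proof (cases "n = 0")
    case True then show ?thesis using g by simp
  next
    case False
    define s where "s = real n / real (Suc n)"
    have "(1 - s) * real (Suc n) powr g = real (Suc n) powr (g - 1)"
      unfolding s_def by (simp add: field_simps powr_diff)
    then have "g * real (Suc n) powr (g - 1) = g * (1 - s) * real (Suc n) powr g"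
      by simp
    also have "\<dots> \<le> (1 - s powr g) * real (Suc n) powr g"
    proof (intro mult_right_mono)
      have "0 < s" using False by (simp add: s_def)
      then show "g * (1 - s) \<le> 1 - s powr g" using powr_le_tangent[of g s] g by (simp add: algebra_simps)
    qed simp
    also have "\<dots> = real (Suc n) powr g - real n powr g"
      unfolding s_def by (simp add: powr_divide algebra_simps)
    finally show ?thesis .
  qed
  have "(\<Sum>j=1..Suc n. real j powr (g - 1)) \<le> real n powr g / g + real (Suc n) powr (g - 1)"
    using Suc by simp
  also have "\<dots> \<le> real n powr g / g + (real (Suc n) powr g - real n powr g) / g"
    using step g by (simp add: le_divide_eq mult.commute)
  finally show ?case by (simp add: diff_divide_distrib)
qed

subsection \<open>Correlations of the normalized fractional Brownian motion\<close>

definition fbm_cov :: "real \<Rightarrow> real \<Rightarrow> real \<Rightarrow> real" where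
  "fbm_cov H t s = (t powr (2*H) + s powr (2*H) - \<bar>t - s\<bar> powr (2*H)) / 2"

lemma fbm_cov_sym: "fbm_cov H t s = fbm_cov H s t"
  unfolding fbm_cov_def by (simp add: abs_minus_commute add.commute)

text \<open>The covariance of the times \<open>x \<le> 1\<close> and \<open>1\<close> is nonnegative and of order
  \<open>x powr (H + min H (1 - H))\<close>: by subadditivity if \<open>H \<le> 1/2\<close>, by convexity otherwise.\<close>
lemma fbm_cov_unit_bounds:
  fixes H x :: real assumes H: "0 < H" "H < 1" and x: "0 < x" "x \<le> 1"
  shows "0 \<le> fbm_cov H x 1" and "fbm_cov H x 1 \<le> 2 * x powr (H + min H (1 - H))"
proof -
  have cov: "fbm_cov H x 1 = (x powr (2*H) + 1 - (1 - x) powr (2*H)) / 2"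
    using x by (simp add: fbm_cov_def abs_if)
  have "(1 - x) powr (2*H) \<le> 1" using x H by (intro powr_le1) auto
  then show "0 \<le> fbm_cov H x 1" unfolding cov by (simp add: add_increasing)
  show "fbm_cov H x 1 \<le> 2 * x powr (H + min H (1 - H))"
  proof (cases "H \<le> 1/2")
    case True
    have "1 \<le> x powr (2*H) + (1 - x) powr (2*H)"
      using powr_subadditive[of "2*H" x "1 - x"] True H x by simp
    moreover have "0 \<le> x powr (2*H)" by simp
    moreover have e: "x powr (H + min H (1 - H)) = x powr (2*H)" using True by (simp add: min_def)
    ultimately show ?thesis unfolding cov e by argo
  next
    case False
    have "1 + 2*H * ((1 - x) - 1) \<le> (1 - x) powr (2*H)"
      using False x by (intro tangent_le_powr) auto
    then have "1 - 2 * (H * x) \<le> (1 - x) powr (2*H)" by (simp add: algebra_simps)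
    moreover have "x powr (2*H) \<le> x" using powr_mono'[of 1 "2*H" x] False x by simp
    moreover have "H * x \<le> x" using H x by simp
    moreover have e: "x powr (H + min H (1 - H)) = x" using False x by (simp add: min_def)
    ultimately show ?thesis unfolding cov e using x by argo
  qed
qed

definition decay :: "real \<Rightarrow> nat \<Rightarrow> nat \<Rightarrow> real" where
  "decay g j k = (real (min j k) / real (max j k)) powr g"

lemma decay_sym: "decay g j k = decay g k j"
  by (simp add: decay_def min.commute max.commute)

lemma decay_le_1: "0 \<le> g \<Longrightarrow> decay g j k \<le> 1"
  unfolding decay_def by (intro powr_le1) (auto simp: divide_le_eq_1)

lemma fbm_corr_scaling:
  fixes H s t :: real assumes st: "0 < s" "s \<le> t"
  shows "fbm_cov H s t / (s powr H * t powr H) = fbm_cov H (s / t) 1 / (s / t) powr H"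
proof -
  define x where "x = s / t"
  have t: "0 < t" and x: "0 < x" "x \<le> 1" and sx: "s = x * t" using st by (auto simp: x_def)
  have "\<bar>s - t\<bar> = (1 - x) * t" using t x by (simp add: sx algebra_simps abs_if)
  then have "\<bar>s - t\<bar> powr (2*H) = (1 - x) powr (2*H) * t powr (2*H)"
    using x t by (simp add: powr_mult)
  moreover have "s powr (2*H) = x powr (2*H) * t powr (2*H)"
    unfolding sx using x t by (simp add: powr_mult)
  moreover have "\<bar>x - 1\<bar> = 1 - x" using x by simp
  ultimately have "fbm_cov H s t = fbm_cov H x 1 * t powr (2*H)"
    unfolding fbm_cov_def by (simp add: algebra_simps)
  moreover have "s powr H * t powr H = x powr H * t powr (2*H)"
    unfolding sx using x t by (simp add: powr_mult powr_add[symmetric])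
  ultimately show ?thesis using t unfolding x_def[symmetric] by simp
qed

lemma fbm_corr_bounds:
  fixes H :: real and j k :: nat assumes H: "0 < H" "H < 1" and jk: "1 \<le> j" "1 \<le> k"
  defines "\<rho> \<equiv> fbm_cov H j k / (real j powr H * real k powr H)"
  shows "0 \<le> \<rho>" and "\<rho> \<le> 2 * decay (min H (1 - H)) j k"
proof -
  have bounds: "0 \<le> fbm_cov H j k / (real j powr H * real k powr H) \<and>
      fbm_cov H j k / (real j powr H * real k powr H) \<le> 2 * decay (min H (1 - H)) j k"
    if "1 \<le> j" "j \<le> k" for j k :: nat
  proof -
    define x where "x = real j / real k"
    have x: "0 < x" "x \<le> 1" using that by (auto simp: x_def)
    have "fbm_cov H x 1 / x powr H \<le> 2 * x powr (H + min H (1 - H)) / x powr H"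
      using fbm_cov_unit_bounds(2)[OF H x] x by (intro divide_right_mono) auto
    also have "\<dots> = 2 * decay (min H (1 - H)) j k"
      using x that by (simp add: powr_add decay_def x_def min_def max_def)
    finally show ?thesis
      using fbm_corr_scaling[of "real j" "real k" H] fbm_cov_unit_bounds(1)[OF H x] that
      by (simp add: x_def)
  qed
  have "0 \<le> \<rho> \<and> \<rho> \<le> 2 * decay (min H (1 - H)) j k"
  proof (cases "j \<le> k")
    case True then show ?thesis using bounds jk unfolding \<rho>_def by blast
  next
    case False
    then show ?thesis using bounds[of k j] jk unfolding \<rho>_def
      by (simp add: fbm_cov_sym mult.commute decay_sym)
  qed
  then show "0 \<le> \<rho>" and "\<rho> \<le> 2 * decay (min H (1 - H)) j k" by auto
qed

subsection \<open>Logarithmic averages\<close>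

definition log_average :: "(nat \<Rightarrow> real) \<Rightarrow> nat \<Rightarrow> real" where
  "log_average f n = (1 / ln (real n)) * (\<Sum>k=1..n. (1 / real k) * f k)"

definition harmonic_average :: "(nat \<Rightarrow> real) \<Rightarrow> nat \<Rightarrow> real" where
  "harmonic_average f n = (\<Sum>k=1..n. (1 / real k) * f k) / harm n"

text \<open>\<open>H_n \<sim> ln n\<close>, since \<open>H_n - ln n\<close> converges to the Euler--Mascheroni constant.\<close>
lemma harm_over_ln: "(\<lambda>n. harm n / ln (real n) :: real) \<longlonglongrightarrow> 1"
proof -
  have "filterlim (\<lambda>n. ln (real n)) at_top sequentially" by real_asymp
  then have "(\<lambda>n. (harm n - ln (real n)) / ln (real n) + 1 :: real) \<longlonglongrightarrow> 0 + 1"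
    by (intro tendsto_add tendsto_const tendsto_divide_0[OF euler_mascheroni_LIMSEQ]
        filterlim_at_top_imp_at_infinity)
  moreover have "eventually (\<lambda>n. (harm n - ln (real n)) / ln (real n) + 1 = harm n / ln (real n)) sequentially"
    using eventually_gt_at_top[of "1::nat"] by eventually_elim (simp add: field_simps)
  ultimately show ?thesis by (simp add: tendsto_cong)
qed

lemma harm_le_ln_plus_1: "1 \<le> n \<Longrightarrow> harm n \<le> ln (real n) + (1::real)"
  using euler_mascheroni_sequence_decreasing[of 1 n] by (simp add: harm_def)

lemma log_average_iff_harmonic_average:
  "log_average f \<longlonglongrightarrow> L \<longleftrightarrow> harmonic_average f \<longlonglongrightarrow> L"
proof
  have "(\<lambda>n. ln (real n) / harm n :: real) \<longlonglongrightarrow> inverse 1"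
    using tendsto_inverse[OF harm_over_ln] by (simp add: inverse_eq_divide)
  moreover assume "log_average f \<longlonglongrightarrow> L"
  ultimately have "(\<lambda>n. log_average f n * (ln (real n) / harm n)) \<longlonglongrightarrow> L * 1"
    by (intro tendsto_mult) simp_all
  moreover have "eventually (\<lambda>n. log_average f n * (ln (real n) / harm n) = harmonic_average f n) sequentially"
    using eventually_gt_at_top[of "1::nat"]
    by eventually_elim (simp add: log_average_def harmonic_average_def)
  ultimately show "harmonic_average f \<longlonglongrightarrow> L" by (simp add: tendsto_cong)
next
  assume "harmonic_average f \<longlonglongrightarrow> L"
  then have "(\<lambda>n. harmonic_average f n * (harm n / ln (real n))) \<longlonglongrightarrow> L * 1"
    by (intro tendsto_mult harm_over_ln)
  moreover have "harmonic_average f n * (harm n / ln (real n)) = log_average f n" for n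
  proof (cases "n = 0")
    case False
    then have "harm n \<noteq> (0::real)" using harm_pos[of n, where 'a=real] by linarith
    then show ?thesis by (simp add: log_average_def harmonic_average_def)
  qed (simp add: log_average_def harmonic_average_def)
  ultimately show "log_average f \<longlonglongrightarrow> L" by simp
qed

lemma log_average_add_const:
  assumes "log_average (\<lambda>k. c + f k) \<longlonglongrightarrow> c + L"
  shows "log_average f \<longlonglongrightarrow> L"
proof -
  have "(\<lambda>n. log_average (\<lambda>k. c + f k) n - c * (harm n / ln (real n))) \<longlonglongrightarrow> (c + L) - c * 1"
    by (intro tendsto_diff tendsto_mult assms tendsto_const harm_over_ln)
  moreover have "log_average (\<lambda>k. c + f k) n - c * (harm n / ln (real n)) = log_average f n" for n
  proof -
    have "(\<Sum>k=1..n. (1 / real k) * (c + f k)) = c * harm n + (\<Sum>k=1..n. (1 / real k) * f k)"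
      by (simp add: harm_def sum.distrib sum_distrib_left distrib_left inverse_eq_divide)
    then show ?thesis by (simp add: log_average_def add_divide_distrib)
  qed
  ultimately show ?thesis by simp
qed

subsection \<open>The variance of logarithmically weighted sums\<close>

lemma decay_column_sum:
  fixes g :: real assumes g: "0 < g" "g \<le> 1" and k: "1 \<le> k"
  shows "(\<Sum>j=1..k. decay g j k / (real j * real k)) \<le> 1 / (g * real k)"
proof -
  have "(\<Sum>j=1..k. decay g j k / (real j * real k))
      = (\<Sum>j=1..k. real j powr (g - 1)) * real k powr (- g - 1)"
    unfolding sum_distrib_right
  proof (intro sum.cong refl)
    fix j assume j: "j \<in> {1..k}"
    then have "decay g j k = real j powr g / real k powr g" by (simp add: decay_def powr_divide)
    then show "decay g j k / (real j * real k) = real j powr (g - 1) * real k powr (- g - 1)"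
      using j by (simp add: powr_diff powr_add powr_minus divide_simps)
  qed
  also have "\<dots> \<le> (real k powr g / g) * real k powr (- g - 1)"
    by (intro mult_right_mono sum_powr_le g) simp
  also have "\<dots> = 1 / (g * real k)"
    using k g by (simp add: powr_add[symmetric] powr_minus divide_simps)
  finally show ?thesis .
qed

text \<open>Summing over both indices, the decay rates contribute only \<open>O(H_n)\<close>, which is what makes
  the variance of a logarithmically weighted sum small compared to its mean squared.\<close>
lemma double_sum_decay_le:
  fixes g :: real assumes g: "0 < g" "g \<le> 1"
  shows "(\<Sum>j=1..n. \<Sum>k=1..n. decay g j k / (real j * real k)) \<le> 2 / g * harm n"
proof -
  define G where "G j k = (if j \<le> k then decay g j k / (real j * real k) else 0)" for j k
  have G_nonneg: "0 \<le> G j k" for j k by (simp add: G_def decay_def)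
  have split: "decay g j k / (real j * real k) \<le> G j k + G k j" for j k
    using G_nonneg[of j k] G_nonneg[of k j]
    by (cases "j \<le> k") (auto simp: G_def decay_sym mult.commute)
  have column: "(\<Sum>j=1..n. G j k) \<le> 1 / (g * real k)" if k: "k \<in> {1..n}" for k
  proof -
    have "(\<Sum>j=1..n. G j k) = (\<Sum>j=1..k. decay g j k / (real j * real k))"
      using k by (intro sum.mono_neutral_cong_right) (auto simp: G_def)
    also have "\<dots> \<le> 1 / (g * real k)" using k by (intro decay_column_sum g) simp
    finally show ?thesis .
  qed
  have "(\<Sum>j=1..n. \<Sum>k=1..n. decay g j k / (real j * real k))
      \<le> (\<Sum>j=1..n. \<Sum>k=1..n. G j k + G k j)"
    by (intro sum_mono split)
  also have "\<dots> = (\<Sum>j=1..n. \<Sum>k=1..n. G j k) + (\<Sum>k=1..n. \<Sum>j=1..n. G j k)"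
    by (simp add: sum.distrib)
  also have "\<dots> = 2 * (\<Sum>k=1..n. \<Sum>j=1..n. G j k)"
    using sum.swap[of "\<lambda>j k. G j k" "{1..n}" "{1..n}"] by simp
  also have "\<dots> \<le> 2 * (\<Sum>k=1..n. 1 / (g * real k))" by (intro mult_left_mono sum_mono column) auto
  also have "(\<Sum>k=1..n. 1 / (g * real k)) = harm n / g"
    by (simp add: harm_def sum_divide_distrib divide_simps mult.commute)
  finally show ?thesis by simp
qed

lemma (in prob_space) second_moment_weighted_sum:
  fixes Y :: "nat \<Rightarrow> 'a \<Rightarrow> real" and w :: "nat \<Rightarrow> real"
  assumes fin: "finite A"
    and int2: "\<And>j k. j \<in> A \<Longrightarrow> k \<in> A \<Longrightarrow> integrable M (\<lambda>\<omega>. Y j \<omega> * Y k \<omega>)"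
    and int1: "\<And>k. k \<in> A \<Longrightarrow> integrable M (Y k)"
    and mean: "\<And>k. k \<in> A \<Longrightarrow> expectation (Y k) = c"
  shows "integrable M (\<lambda>\<omega>. (\<Sum>k\<in>A. w k * (Y k \<omega> - c))^2)"
    and "expectation (\<lambda>\<omega>. (\<Sum>k\<in>A. w k * (Y k \<omega> - c))^2)
           = (\<Sum>j\<in>A. \<Sum>k\<in>A. w j * w k * (expectation (\<lambda>\<omega>. Y j \<omega> * Y k \<omega>) - c^2))"
proof -
  define Z where "Z j k = (\<lambda>\<omega>. w j * w k * (Y j \<omega> * Y k \<omega> - c * Y j \<omega> - c * Y k \<omega> + c^2))"
    for j k
  have square: "(\<Sum>k\<in>A. w k * (Y k \<omega> - c))^2 = (\<Sum>j\<in>A. \<Sum>k\<in>A. Z j k \<omega>)" for \<omega>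
    unfolding power2_eq_square sum_product Z_def
    by (intro sum.cong refl) (simp add: algebra_simps)
  have Z_int: "integrable M (Z j k)" and Z_exp: "expectation (Z j k) =
      w j * w k * (expectation (\<lambda>\<omega>. Y j \<omega> * Y k \<omega>) - c^2)" if "j \<in> A" "k \<in> A" for j k
    using int2[OF that] int1[OF that(1)] int1[OF that(2)] mean[OF that(1)] mean[OF that(2)]
    by (auto simp: Z_def prob_space power2_eq_square)
  show "integrable M (\<lambda>\<omega>. (\<Sum>k\<in>A. w k * (Y k \<omega> - c))^2)"
    unfolding square by (intro Bochner_Integration.integrable_sum Z_int)
  have "expectation (\<lambda>\<omega>. (\<Sum>k\<in>A. w k * (Y k \<omega> - c))^2) = (\<Sum>j\<in>A. \<Sum>k\<in>A. expectation (Z j k))"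
    unfolding square using Z_int
    by (simp add: Bochner_Integration.integral_sum Bochner_Integration.integrable_sum)
  also have "\<dots> = (\<Sum>j\<in>A. \<Sum>k\<in>A. w j * w k * (expectation (\<lambda>\<omega>. Y j \<omega> * Y k \<omega>) - c^2))"
    by (intro sum.cong refl Z_exp)
  finally show "expectation (\<lambda>\<omega>. (\<Sum>k\<in>A. w k * (Y k \<omega> - c))^2)
           = (\<Sum>j\<in>A. \<Sum>k\<in>A. w j * w k * (expectation (\<lambda>\<omega>. Y j \<omega> * Y k \<omega>) - c^2))" .
qed

lemma (in prob_space) log_weighted_sum_second_moment:
  fixes Y :: "nat \<Rightarrow> 'a \<Rightarrow> real" and c C g :: real
  assumes int2: "\<And>j k. 1 \<le> j \<Longrightarrow> 1 \<le> k \<Longrightarrow> integrable M (\<lambda>\<omega>. Y j \<omega> * Y k \<omega>)"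
    and int1: "\<And>k. 1 \<le> k \<Longrightarrow> integrable M (Y k)"
    and mean: "\<And>k. 1 \<le> k \<Longrightarrow> expectation (Y k) = c"
    and cov: "\<And>j k. 1 \<le> j \<Longrightarrow> 1 \<le> k \<Longrightarrow>
               \<bar>expectation (\<lambda>\<omega>. Y j \<omega> * Y k \<omega>) - c^2\<bar> \<le> C * decay g j k"
    and g: "0 < g" "g \<le> 1" and C: "0 \<le> C"
  shows "integrable M (\<lambda>\<omega>. (\<Sum>k=1..n. (1 / real k) * (Y k \<omega> - c))^2)"
    and "expectation (\<lambda>\<omega>. (\<Sum>k=1..n. (1 / real k) * (Y k \<omega> - c))^2) \<le> 2 * C / g * harm n"
proof -
  show "integrable M (\<lambda>\<omega>. (\<Sum>k=1..n. (1 / real k) * (Y k \<omega> - c))^2)"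
    by (rule second_moment_weighted_sum(1)) (auto intro: int2 int1 mean)
  have "expectation (\<lambda>\<omega>. (\<Sum>k=1..n. (1 / real k) * (Y k \<omega> - c))^2)
      = (\<Sum>j=1..n. \<Sum>k=1..n. (1 / real j) * (1 / real k) * (expectation (\<lambda>\<omega>. Y j \<omega> * Y k \<omega>) - c^2))"
    by (rule second_moment_weighted_sum(2)) (auto intro: int2 int1 mean)
  also have "\<dots> \<le> (\<Sum>j=1..n. \<Sum>k=1..n. C * (decay g j k / (real j * real k)))"
  proof (intro sum_mono)
    fix j k assume "j \<in> {1..n}" "k \<in> {1..n}"
    then have "expectation (\<lambda>\<omega>. Y j \<omega> * Y k \<omega>) - c^2 \<le> C * decay g j k"
      using cov[of j k] by simp
    then have "(1 / (real j * real k)) * (expectation (\<lambda>\<omega>. Y j \<omega> * Y k \<omega>) - c^2)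
        \<le> (1 / (real j * real k)) * (C * decay g j k)"
      by (rule mult_left_mono) simp
    then show "(1 / real j) * (1 / real k) * (expectation (\<lambda>\<omega>. Y j \<omega> * Y k \<omega>) - c^2)
        \<le> C * (decay g j k / (real j * real k))"
      by (simp add: ac_simps)
  qed
  also have "\<dots> \<le> C * (2 / g * harm n)"
    unfolding sum_distrib_left[symmetric] by (intro mult_left_mono double_sum_decay_le g C)
  finally show "expectation (\<lambda>\<omega>. (\<Sum>k=1..n. (1 / real k) * (Y k \<omega> - c))^2) \<le> 2 * C / g * harm n"
    by (simp add: ac_simps)
qed

subsection \<open>An almost sure law of large numbers for logarithmic averages\<close>

text \<open>Second moments that are summable against the weights \<open>(m + 1)^2\<close> force almost sure
  convergence to 0, by Chebyshev's inequality and the Borel--Cantelli lemma.\<close>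
lemma (in prob_space) AE_tendsto_zero_of_second_moments:
  fixes f :: "nat \<Rightarrow> 'a \<Rightarrow> real"
  assumes meas: "\<And>m. f m \<in> borel_measurable M"
    and int: "\<And>m. integrable M (\<lambda>\<omega>. f m \<omega> ^ 2)"
    and summ: "summable (\<lambda>m. real (Suc m)^2 * expectation (\<lambda>\<omega>. f m \<omega> ^ 2))"
  shows "AE \<omega> in M. (\<lambda>m. f m \<omega>) \<longlonglongrightarrow> 0"
proof -
  define A where "A m = {\<omega>\<in>space M. 1 / real (Suc m) \<le> \<bar>f m \<omega>\<bar>}" for m
  have A_events: "A m \<in> events" for m unfolding A_def using meas by measurable
  have "prob (A m) \<le> real (Suc m)^2 * expectation (\<lambda>\<omega>. f m \<omega> ^ 2)" for m
  proof -
    have "prob (A m) \<le> expectation (\<lambda>\<omega>. f m \<omega> ^ 2) / (1 / real (Suc m))^2"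
      unfolding A_def by (rule second_moment_method) (use meas int in auto)
    then show ?thesis by (simp add: power_divide mult.commute)
  qed
  then have "summable (\<lambda>m. prob (A m))"
    by (intro summable_comparison_test'[OF summ]) simp
  then have "AE \<omega> in M. eventually (\<lambda>m. \<omega> \<in> space M - A m) sequentially"
    by (intro borel_cantelli_AE1) (auto simp: A_events less_top[symmetric])
  then show ?thesis
  proof eventually_elim
    case (elim \<omega>)
    show ?case
    proof (rule Lim_null_comparison)
      show "eventually (\<lambda>m. norm (f m \<omega>) \<le> 1 / real (Suc m)) sequentially"
        using elim by eventually_elim (auto simp: A_def)
      show "(\<lambda>m. 1 / real (Suc m)) \<longlonglongrightarrow> 0" by real_asymp
    qed
  qed
qed

lemma block_index:
  fixes s :: "nat \<Rightarrow> nat" assumes s: "strict_mono s"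
  obtains idx where "\<And>n. s 0 \<le> n \<Longrightarrow> s (idx n) \<le> n \<and> n < s (Suc (idx n))"
    and "filterlim idx at_top sequentially"
proof
  define idx where "idx n = (LEAST m. n < s (Suc m))" for n
  have up: "n < s (Suc (idx n))" for n
    unfolding idx_def
    by (rule LeastI[of "\<lambda>m. n < s (Suc m)" n]) (use strict_mono_imp_increasing[OF s, of "Suc n"] in simp)
  show "s (idx n) \<le> n \<and> n < s (Suc (idx n))" if "s 0 \<le> n" for n
  proof (cases "idx n")
    case (Suc m)
    then have "\<not> n < s (Suc m)" using not_less_Least[of m "\<lambda>m. n < s (Suc m)"] by (simp add: idx_def)
    then show ?thesis using Suc up[of n] by simp
  qed (use that up[of n] in simp)
  show "filterlim idx at_top sequentially"
    unfolding filterlim_at_top eventually_sequentially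
  proof (intro allI exI impI)
    fix Z n assume n: "s (Suc Z) \<le> n"
    show "Z \<le> idx n"
    proof (rule ccontr)
      assume "\<not> Z \<le> idx n"
      then have "s (Suc (idx n)) \<le> s Z" using strict_mono_less_eq[OF s] by simp
      then show False using n up[of n] strict_monoD[OF s, of Z "Suc Z"] by simp
    qed
  qed
qed

lemma log_average_interpolation:
  fixes T :: "nat \<Rightarrow> real" and s :: "nat \<Rightarrow> nat"
  assumes mono: "mono T" and T0: "\<And>n. 0 \<le> T n"
    and s: "strict_mono s" "2 \<le> s 0"
    and ratio: "(\<lambda>m. ln (real (s (Suc m))) / ln (real (s m))) \<longlonglongrightarrow> 1"
    and conv: "(\<lambda>m. T (s m) / ln (real (s m))) \<longlonglongrightarrow> c"
  shows "(\<lambda>n. T n / ln (real n)) \<longlonglongrightarrow> c"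
proof -
  obtain idx where idx: "\<And>n. s 0 \<le> n \<Longrightarrow> s (idx n) \<le> n \<and> n < s (Suc (idx n))"
    and idx_lim: "filterlim idx at_top sequentially"
    using block_index[OF s(1)] by blast
  have s2: "2 \<le> s m" for m using s strict_mono_less_eq[OF s(1), of 0 m] by simp
  have ln_s: "0 < ln (real (s m))" for m using s2[of m] by simp
  define lower where "lower m = T (s m) / ln (real (s m)) / (ln (real (s (Suc m))) / ln (real (s m)))" for m
  define upper where "upper m = T (s (Suc m)) / ln (real (s (Suc m))) * (ln (real (s (Suc m))) / ln (real (s m)))" for m
  have "lower \<longlonglongrightarrow> c / 1" unfolding lower_def by (intro tendsto_divide conv ratio) simp
  then have lower_lim: "(\<lambda>n. lower (idx n)) \<longlonglongrightarrow> c" using filterlim_compose[OF _ idx_lim] by simp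
  have "upper \<longlonglongrightarrow> c * 1" unfolding upper_def by (intro tendsto_mult ratio LIMSEQ_Suc[OF conv])
  then have upper_lim: "(\<lambda>n. upper (idx n)) \<longlonglongrightarrow> c" using filterlim_compose[OF _ idx_lim] by simp
  have sandwich: "lower (idx n) \<le> T n / ln (real n) \<and> T n / ln (real n) \<le> upper (idx n)"
    if n: "s 0 \<le> n" for n
  proof -
    define m where "m = idx n"
    have block: "s m \<le> n" "n < s (Suc m)" using idx[OF n] by (auto simp: m_def)
    have ln_n: "ln (real (s m)) \<le> ln (real n)" "ln (real n) \<le> ln (real (s (Suc m)))"
      using block s2[of m] by simp_all
    have "lower m = T (s m) / ln (real (s (Suc m)))"
      unfolding lower_def using ln_s[of m] by simp
    also have "\<dots> \<le> T n / ln (real n)"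
      using ln_n ln_s[of m] T0[of "s m"] monoD[OF mono, of "s m" n] block
      by (intro frac_le) auto
    finally have "lower m \<le> T n / ln (real n)" .
    moreover have "T n / ln (real n) \<le> T (s (Suc m)) / ln (real (s m))"
      using ln_n ln_s[of m] T0[of n] monoD[OF mono, of n "s (Suc m)"] block
      by (intro frac_le) auto
    moreover have "T (s (Suc m)) / ln (real (s m)) = upper m"
      unfolding upper_def using ln_s[of "Suc m"] by simp
    ultimately show ?thesis by (simp add: m_def)
  qed
  show ?thesis
    by (rule tendsto_sandwich[OF _ _ lower_lim upper_lim])
      (use sandwich in \<open>auto simp: eventually_sequentially\<close>)
qed

text \<open>The lacunary sequence \<open>2 ^ (m + 1)^4\<close>: it grows fast enough for Borel--Cantelli, while
  the ratio of consecutive logarithms still tends to 1.\<close>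
definition lacunary :: "nat \<Rightarrow> nat" where
  "lacunary m = 2 ^ ((m + 1)^4)"

lemma ln_lacunary: "ln (real (lacunary m)) = real ((m + 1)^4) * ln 2"
  unfolding lacunary_def by (simp add: ln_realpow)

lemma strict_mono_lacunary: "strict_mono lacunary"
  unfolding strict_mono_def lacunary_def
  by (intro allI impI power_strict_increasing power_strict_mono) auto

lemma ln_lacunary_ratio: "(\<lambda>m. ln (real (lacunary (Suc m))) / ln (real (lacunary m))) \<longlonglongrightarrow> 1"
proof -
  have "(\<lambda>m::nat. real ((m + 2)^4) / real ((m + 1)^4)) \<longlonglongrightarrow> 1" by real_asymp
  then show ?thesis by (simp add: ln_lacunary)
qed

text \<open>Under the covariance hypotheses of the law of large numbers, the normalized
  logarithmic sums converge almost surely along the lacunary sequence: the centred sums have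
  second moment \<open>O(ln n)\<close>, i.e. \<open>O(1 / (m + 1)^4)\<close> after normalization.\<close>
lemma (in prob_space) log_sum_lacunary_convergence:
  fixes Y :: "nat \<Rightarrow> 'a \<Rightarrow> real" and c C g :: real
  assumes meas: "\<And>k. Y k \<in> borel_measurable M"
    and int2: "\<And>j k. 1 \<le> j \<Longrightarrow> 1 \<le> k \<Longrightarrow> integrable M (\<lambda>\<omega>. Y j \<omega> * Y k \<omega>)"
    and int1: "\<And>k. 1 \<le> k \<Longrightarrow> integrable M (Y k)"
    and mean: "\<And>k. 1 \<le> k \<Longrightarrow> expectation (Y k) = c"
    and cov: "\<And>j k. 1 \<le> j \<Longrightarrow> 1 \<le> k \<Longrightarrow>
               \<bar>expectation (\<lambda>\<omega>. Y j \<omega> * Y k \<omega>) - c^2\<bar> \<le> C * decay g j k"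
    and g: "0 < g" "g \<le> 1" and C: "0 \<le> C"
  shows "AE \<omega> in M. (\<lambda>m. (\<Sum>k=1..lacunary m. (1 / real k) * Y k \<omega>) / ln (real (lacunary m)))
           \<longlonglongrightarrow> c"
proof -
  note second_moment = log_weighted_sum_second_moment[of Y c C g, OF int2 int1 mean cov g C]
  define L where "L m = ln (real (lacunary m))" for m
  have L_ge: "1/2 \<le> L m" for m
  proof -
    have "1 * ln 2 \<le> real ((m + 1)^4) * ln (2::real)" by (intro mult_right_mono) auto
    then show ?thesis using ln2_ge_two_thirds ln_lacunary[of m] unfolding L_def by linarith
  qed
  define f where "f m \<omega> = (\<Sum>k=1..lacunary m. (1 / real k) * (Y k \<omega> - c)) / L m" for m \<omega>
  have f_int: "integrable M (\<lambda>\<omega>. f m \<omega> ^ 2)" for m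
    unfolding f_def power_divide by (intro integrable_divide second_moment(1))
  have f_moment: "expectation (\<lambda>\<omega>. f m \<omega> ^ 2) \<le> 6 * C / (g * ln 2) / real (Suc m)^4" for m
  proof -
    have "harm (lacunary m) \<le> L m + 1"
      unfolding L_def by (intro harm_le_ln_plus_1) (simp add: lacunary_def)
    also have "\<dots> \<le> 3 * L m" using L_ge[of m] by simp
    finally have "2 * C / g * harm (lacunary m) \<le> 2 * C / g * (3 * L m)"
      using C g by (intro mult_left_mono) auto
    then have "expectation (\<lambda>\<omega>. (\<Sum>k=1..lacunary m. (1 / real k) * (Y k \<omega> - c))^2) / (L m)^2
        \<le> 2 * C / g * (3 * L m) / (L m)^2"
      by (intro divide_right_mono order_trans[OF second_moment(2)]) auto
    then have "expectation (\<lambda>\<omega>. f m \<omega> ^ 2) \<le> 2 * C / g * (3 * L m) / (L m)^2"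
      unfolding f_def power_divide by simp
    also have "\<dots> = 6 * C / (g * L m)"
      using L_ge[of m] by (simp add: field_simps power2_eq_square)
    also have "\<dots> = 6 * C / (g * ln 2) / real (Suc m)^4"
      unfolding L_def ln_lacunary by (simp add: field_simps)
    finally show ?thesis .
  qed
  have f_lim: "AE \<omega> in M. (\<lambda>m. f m \<omega>) \<longlonglongrightarrow> 0"
  proof (rule AE_tendsto_zero_of_second_moments)
    show "f m \<in> borel_measurable M" for m unfolding f_def using meas by measurable
    show "integrable M (\<lambda>\<omega>. f m \<omega> ^ 2)" for m by (rule f_int)
    have "summable (\<lambda>m. inverse (real m ^ 2))" by (rule inverse_power_summable) simp
    then have "summable (\<lambda>m. 6 * C / (g * ln 2) * inverse (real (Suc m) ^ 2))"
      by (intro summable_mult) (subst summable_Suc_iff)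
    then show "summable (\<lambda>m. real (Suc m)^2 * expectation (\<lambda>\<omega>. f m \<omega> ^ 2))"
    proof (rule summable_comparison_test')
      have square_over_fourth: "x^2 * (K / x^4) = K * inverse (x^2)" if "0 < x" for x K :: real
        using that by (simp add: field_simps eval_nat_numeral)
      fix m
      have "real (Suc m)^2 * expectation (\<lambda>\<omega>. f m \<omega> ^ 2)
          \<le> real (Suc m)^2 * (6 * C / (g * ln 2) / real (Suc m)^4)"
        by (intro mult_left_mono f_moment) simp
      also have "\<dots> = 6 * C / (g * ln 2) * inverse (real (Suc m) ^ 2)"
        by (rule square_over_fourth) simp
      finally show "norm (real (Suc m)^2 * expectation (\<lambda>\<omega>. f m \<omega> ^ 2))
          \<le> 6 * C / (g * ln 2) * inverse (real (Suc m) ^ 2)"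
        by simp
    qed
  qed
  have harm_L: "(\<lambda>m. harm (lacunary m) / L m) \<longlonglongrightarrow> 1"
    unfolding L_def by (rule filterlim_compose[OF harm_over_ln filterlim_subseq[OF strict_mono_lacunary]])
  show ?thesis
    using f_lim
  proof eventually_elim
    case (elim \<omega>)
    have "(\<lambda>m. f m \<omega> + c * (harm (lacunary m) / L m)) \<longlonglongrightarrow> 0 + c * 1"
      by (intro tendsto_add tendsto_mult elim tendsto_const harm_L)
    moreover have "f m \<omega> + c * (harm (lacunary m) / L m)
        = (\<Sum>k=1..lacunary m. (1 / real k) * Y k \<omega>) / ln (real (lacunary m))" for m
    proof -
      have "(\<Sum>k=1..lacunary m. (1 / real k) * (Y k \<omega> - c))
          = (\<Sum>k=1..lacunary m. (1 / real k) * Y k \<omega>) - c * harm (lacunary m)"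
        unfolding harm_def by (simp add: sum_subtractf sum_distrib_left algebra_simps divide_inverse)
      then show ?thesis unfolding f_def L_def by (simp add: diff_divide_distrib)
    qed
    ultimately show ?case by simp
  qed
qed

text \<open>Almost sure law of large numbers for logarithmic averages of nonnegative variables with a
  common mean whose covariances decay like \<open>decay g j k\<close>: the partial sums are monotone, so
  convergence along the lacunary sequence extends to all \<open>n\<close>.\<close>
lemma (in prob_space) log_average_lln:
  fixes Y :: "nat \<Rightarrow> 'a \<Rightarrow> real" and c C g :: real
  assumes meas: "\<And>k. Y k \<in> borel_measurable M"
    and nonneg: "\<And>k \<omega>. 1 \<le> k \<Longrightarrow> \<omega> \<in> space M \<Longrightarrow> 0 \<le> Y k \<omega>"
    and int2: "\<And>j k. 1 \<le> j \<Longrightarrow> 1 \<le> k \<Longrightarrow> integrable M (\<lambda>\<omega>. Y j \<omega> * Y k \<omega>)"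
    and int1: "\<And>k. 1 \<le> k \<Longrightarrow> integrable M (Y k)"
    and mean: "\<And>k. 1 \<le> k \<Longrightarrow> expectation (Y k) = c"
    and cov: "\<And>j k. 1 \<le> j \<Longrightarrow> 1 \<le> k \<Longrightarrow>
               \<bar>expectation (\<lambda>\<omega>. Y j \<omega> * Y k \<omega>) - c^2\<bar> \<le> C * decay g j k"
    and g: "0 < g" "g \<le> 1" and C: "0 \<le> C"
  shows "AE \<omega> in M. log_average (\<lambda>k. Y k \<omega>) \<longlonglongrightarrow> c"
proof -
  have "AE \<omega> in M. (\<lambda>m. (\<Sum>k=1..lacunary m. (1 / real k) * Y k \<omega>) / ln (real (lacunary m)))
      \<longlonglongrightarrow> c"
    by (rule log_sum_lacunary_convergence[where C=C and g=g]) (fact meas int2 int1 mean cov g C)+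
  then show ?thesis
    using AE_space
  proof eventually_elim
    case (elim \<omega>)
    define T where "T n = (\<Sum>k=1..n. (1 / real k) * Y k \<omega>)" for n
    have "mono T" by (intro incseq_SucI) (simp add: T_def nonneg elim(2))
    moreover have "0 \<le> T n" for n unfolding T_def using nonneg elim(2) by (intro sum_nonneg) auto
    moreover have "2 \<le> lacunary 0" by (simp add: lacunary_def)
    moreover have "(\<lambda>m. T (lacunary m) / ln (real (lacunary m))) \<longlonglongrightarrow> c"
      using elim(1) by (simp add: T_def)
    ultimately have "(\<lambda>n. T n / ln (real n)) \<longlonglongrightarrow> c"
      using strict_mono_lacunary ln_lacunary_ratio by (intro log_average_interpolation)
    then show ?case unfolding T_def log_average_def by simp
  qed
qed

subsection \<open>Centred Gaussian variables\<close>

lemma (in finite_measure) integrable_cos_sin: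
  fixes f :: "'a \<Rightarrow> real" assumes [measurable]: "f \<in> borel_measurable M"
  shows "integrable M (\<lambda>x. cos (f x))" and "integrable M (\<lambda>x. sin (f x))"
  by (intro integrable_const_bound[where B=1]; simp)+

text \<open>Trigonometric, second and fourth moments of a standard normal variable, read off from
  the characteristic function \<open>exp (- t^2 / 2)\<close> and the even moments.\<close>
lemma std_normal_moments:
  fixes M :: "'a measure" and W :: "'a \<Rightarrow> real"
  assumes D: "distributed M lborel W std_normal_density"
  shows "integral\<^sup>L M (\<lambda>x. cos (t * W x)) = exp (- (t^2) / 2)"
    and "integral\<^sup>L M (\<lambda>x. sin (t * W x)) = 0"
    and "integral\<^sup>L M (\<lambda>x. W x ^ 2) = 1"
    and "integral\<^sup>L M (\<lambda>x. W x ^ 4) = 3"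
    and "integrable M (\<lambda>x. W x ^ 2)"
    and "integrable M (\<lambda>x. W x ^ 4)"
proof -
  have transfer: "integral\<^sup>L M (\<lambda>x. g (W x)) = integral\<^sup>L std_normal_distribution g"
    if [measurable]: "g \<in> borel_measurable borel" for g :: "real \<Rightarrow> real"
  proof -
    have "integral\<^sup>L M (\<lambda>x. g (W x)) = (\<integral>x. std_normal_density x * g x \<partial>lborel)"
      by (rule distributed_integral[OF D, symmetric]) auto
    also have "\<dots> = integral\<^sup>L std_normal_distribution g"
      by (subst integral_density) auto
    finally show ?thesis .
  qed
  interpret N: real_distribution std_normal_distribution by (rule real_dist_normal_dist)
  have iexp_int: "complex_integrable std_normal_distribution (\<lambda>x. iexp (t * x))"
    using N.integrable_iexp[of "\<lambda>x. complex_of_real (t * x)"] by simp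
  have cos_eq: "(\<lambda>x. cos (t * x)) = (\<lambda>x. Re (iexp (t * x)))" by (simp add: Re_exp)
  have sin_eq: "(\<lambda>x. sin (t * x)) = (\<lambda>x. Im (iexp (t * x)))" by (simp add: Im_exp)
  have "integral\<^sup>L std_normal_distribution (\<lambda>x. cos (t * x)) = Re (char std_normal_distribution t)"
    unfolding char_def cos_eq by (rule integral_Re[OF iexp_int])
  then show "integral\<^sup>L M (\<lambda>x. cos (t * W x)) = exp (- (t^2) / 2)"
    using transfer[of "\<lambda>x. cos (t * x)"] by (simp add: char_std_normal_distribution)
  have "integral\<^sup>L std_normal_distribution (\<lambda>x. sin (t * x)) = Im (char std_normal_distribution t)"
    unfolding char_def sin_eq by (rule integral_Im[OF iexp_int])
  then show "integral\<^sup>L M (\<lambda>x. sin (t * W x)) = 0"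
    using transfer[of "\<lambda>x. sin (t * x)"] by (simp add: char_std_normal_distribution)
  show "integral\<^sup>L M (\<lambda>x. W x ^ 2) = 1"
    using transfer[of "\<lambda>x. x ^ (2 * 1)"] std_normal_distribution_even_moments(1)[of 1] by simp
  show "integral\<^sup>L M (\<lambda>x. W x ^ 4) = 3"
    using transfer[of "\<lambda>x. x ^ (2 * 2)"] std_normal_distribution_even_moments(1)[of 2]
    by (simp add: fact_numeral)
  show "integrable M (\<lambda>x. W x ^ 2)"
    using distributed_integrable[OF D, of "\<lambda>x. x ^ 2"] integrable_std_normal_moment[of 2] by simp
  show "integrable M (\<lambda>x. W x ^ 4)"
    using distributed_integrable[OF D, of "\<lambda>x. x ^ 4"] integrable_std_normal_moment[of 4] by simp
qed

text \<open>A normal variable with mean 0 and standard deviation \<open>\<sigma>\<close> is \<open>\<sigma>\<close> times a standard normal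
  one.\<close>
lemma (in prob_space) centered_normal_moments:
  fixes Z :: "'a \<Rightarrow> real"
  assumes \<sigma>: "0 < \<sigma>" and D: "distributed M lborel Z (normal_density 0 \<sigma>)"
  shows "integrable M (\<lambda>x. Z x ^ 2)" and "integrable M (\<lambda>x. Z x ^ 4)"
    and "integral\<^sup>L M (\<lambda>x. Z x ^ 2) = \<sigma>^2" and "integral\<^sup>L M (\<lambda>x. Z x ^ 4) = 3 * (\<sigma>^2)^2"
    and "integral\<^sup>L M (\<lambda>x. cos (Z x)) = exp (- (\<sigma>^2) / 2)"
    and "integral\<^sup>L M (\<lambda>x. sin (Z x)) = 0"
proof -
  define W where "W x = Z x / \<sigma>" for x
  have "distributed M lborel W std_normal_density"
    using normal_standard_normal_convert[OF \<sigma>, of Z 0] D by (simp add: W_def[abs_def])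
  note W = std_normal_moments[OF this]
  have Z_eq: "Z x = \<sigma> * W x" for x using \<sigma> by (simp add: W_def)
  show "integrable M (\<lambda>x. Z x ^ 2)" "integrable M (\<lambda>x. Z x ^ 4)"
    unfolding Z_eq by (simp_all add: power_mult_distrib W(5,6))
  show "integral\<^sup>L M (\<lambda>x. Z x ^ 2) = \<sigma>^2"
    unfolding Z_eq by (simp add: power_mult_distrib W(3))
  show "integral\<^sup>L M (\<lambda>x. Z x ^ 4) = 3 * (\<sigma>^2)^2"
    unfolding Z_eq by (simp add: power_mult_distrib W(4) flip: power_mult)
  show "integral\<^sup>L M (\<lambda>x. cos (Z x)) = exp (- (\<sigma>^2) / 2)" "integral\<^sup>L M (\<lambda>x. sin (Z x)) = 0"
    unfolding Z_eq using W(1,2)[of \<sigma>] by simp_all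
qed

lemma (in prob_space) integral_AE_zero_rv:
  fixes Z :: "'a \<Rightarrow> real" and h :: "real \<Rightarrow> real"
  assumes Z_meas: "Z \<in> borel_measurable M" and ae0: "AE x in M. Z x = 0"
    and h_meas: "h \<in> borel_measurable borel"
  shows "integrable M (\<lambda>x. h (Z x))" and "integral\<^sup>L M (\<lambda>x. h (Z x)) = h 0"
proof -
  have meas: "(\<lambda>x. h (Z x)) \<in> borel_measurable M" using Z_meas h_meas by measurable
  have "AE x in M. h 0 = h (Z x)" using ae0 by auto
  from integrable_cong_AE_imp[OF _ meas this] show "integrable M (\<lambda>x. h (Z x))" by simp
  have "integral\<^sup>L M (\<lambda>x. h (Z x)) = integral\<^sup>L M (\<lambda>x. h 0)"
    using ae0 Z_meas h_meas by (intro integral_cong_AE) auto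
  then show "integral\<^sup>L M (\<lambda>x. h (Z x)) = h 0" by (simp add: prob_space)
qed

lemma centered_gaussian_moments:
  fixes M :: "'a measure" and Z :: "'a \<Rightarrow> real"
  assumes P: "prob_space M" and G: "gaussian_rv M Z" and I: "integrable M Z"
    and E0: "integral\<^sup>L M Z = 0"
  shows "integrable M (\<lambda>x. Z x ^ 2)"
    and "integrable M (\<lambda>x. Z x ^ 4)"
    and "integral\<^sup>L M (\<lambda>x. Z x ^ 4) = 3 * (integral\<^sup>L M (\<lambda>x. Z x ^ 2))^2"
    and "integral\<^sup>L M (\<lambda>x. cos (Z x)) = exp (- integral\<^sup>L M (\<lambda>x. Z x ^ 2) / 2)"
    and "integral\<^sup>L M (\<lambda>x. sin (Z x)) = 0"
proof -
  interpret prob_space M by (rule P)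
  have "integrable M (\<lambda>x. Z x ^ 2) \<and> integrable M (\<lambda>x. Z x ^ 4) \<and>
    integral\<^sup>L M (\<lambda>x. Z x ^ 4) = 3 * (integral\<^sup>L M (\<lambda>x. Z x ^ 2))^2 \<and>
    integral\<^sup>L M (\<lambda>x. cos (Z x)) = exp (- integral\<^sup>L M (\<lambda>x. Z x ^ 2) / 2) \<and>
    integral\<^sup>L M (\<lambda>x. sin (Z x)) = 0"
    using G unfolding gaussian_rv_def
  proof (elim disjE exE conjE)
    fix \<mu> \<sigma> assume \<sigma>: "0 < \<sigma>" and D: "distributed M lborel Z (normal_density \<mu> \<sigma>)"
    have "\<mu> = 0" using normal_distributed_expectation[OF \<sigma> D] E0 by simp
    with centered_normal_moments[OF \<sigma>] D show ?thesis by simp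
  next
    fix c assume Z_meas: "Z \<in> borel_measurable M" and ae: "AE x in M. Z x = c"
    have "c = 0" using E0 integral_cong_AE[OF Z_meas _ ae] by (simp add: prob_space)
    then have "AE x in M. Z x = 0" using ae by simp
    note zero = integral_AE_zero_rv[OF Z_meas this]
    show ?thesis using zero[of "\<lambda>x. x^2"] zero[of "\<lambda>x. x^4"] zero[of cos] zero[of sin] by simp
  qed
  then show "integrable M (\<lambda>x. Z x ^ 2)"
    and "integrable M (\<lambda>x. Z x ^ 4)"
    and "integral\<^sup>L M (\<lambda>x. Z x ^ 4) = 3 * (integral\<^sup>L M (\<lambda>x. Z x ^ 2))^2"
    and "integral\<^sup>L M (\<lambda>x. cos (Z x)) = exp (- integral\<^sup>L M (\<lambda>x. Z x ^ 2) / 2)"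
    and "integral\<^sup>L M (\<lambda>x. sin (Z x)) = 0" by auto
qed

lemma centered_gaussian_cos_shift:
  fixes M :: "'a measure" and Z :: "'a \<Rightarrow> real"
  assumes P: "prob_space M" and G: "gaussian_rv M Z" and I: "integrable M Z"
    and E0: "integral\<^sup>L M Z = 0"
  shows "integral\<^sup>L M (\<lambda>x. cos (Z x + \<theta>)) = cos \<theta> * exp (- integral\<^sup>L M (\<lambda>x. Z x ^ 2) / 2)"
proof -
  interpret prob_space M by (rule P)
  have "Z \<in> borel_measurable M" using I by (rule borel_measurable_integrable)
  then have "integrable M (\<lambda>x. cos (Z x))" "integrable M (\<lambda>x. sin (Z x))"
    by (rule integrable_cos_sin)+
  then show ?thesis
    using centered_gaussian_moments(4,5)[OF assms] by (simp add: cos_add)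
qed

subsection \<open>From trigonometric averages to weak convergence\<close>

lemma tendsto_from_rationals_lipschitz:
  fixes F :: "nat \<Rightarrow> real \<Rightarrow> 'b::real_normed_vector" and e :: "real \<Rightarrow> 'b"
  assumes rat: "\<And>q. q \<in> \<rat> \<Longrightarrow> (\<lambda>n. F n q) \<longlonglongrightarrow> e q"
    and cont: "isCont e t"
    and lip: "eventually (\<lambda>n. \<forall>s u. norm (F n s - F n u) \<le> K * \<bar>s - u\<bar>) sequentially"
  shows "(\<lambda>n. F n t) \<longlonglongrightarrow> e t"
proof (rule LIMSEQ_I)
  fix r :: real assume r: "0 < r"
  obtain d where d: "0 < d" "\<And>s. dist s t < d \<Longrightarrow> dist (e s) (e t) < r / 3"
    using cont r unfolding continuous_at_eps_delta by (metis divide_pos_pos zero_less_numeral)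
  define d' where "d' = min d (r / (3 * (\<bar>K\<bar> + 1)))"
  have "0 < d'" using d r by (simp add: d'_def)
  then obtain q where q: "q \<in> \<rat>" "t < q" "q < t + d'"
    using Rats_dense_in_real[of t "t + d'"] by auto
  have near: "\<bar>q - t\<bar> < d" "K * \<bar>t - q\<bar> \<le> r / 3"
  proof -
    show "\<bar>q - t\<bar> < d" using q by (simp add: d'_def)
    have "\<bar>t - q\<bar> \<le> r / (3 * (\<bar>K\<bar> + 1))" using q by (simp add: d'_def)
    then have "(\<bar>K\<bar> + 1) * \<bar>t - q\<bar> \<le> r / 3" by (simp add: field_simps)
    then show "K * \<bar>t - q\<bar> \<le> r / 3"
      by (smt (verit, best) abs_ge_self abs_not_less_zero mult_right_mono)
  qed
  have "eventually (\<lambda>n. norm (F n q - e q) < r / 3) sequentially"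
    using tendstoD[OF rat[OF q(1)], of "r / 3"] r by (simp add: dist_norm)
  then have "eventually (\<lambda>n. norm (F n t - e t) < r) sequentially"
    using lip
  proof eventually_elim
    case (elim n)
    have "norm (F n t - e t) = norm ((F n t - F n q) + (F n q - e q) + (e q - e t))" by simp
    also have "\<dots> \<le> norm ((F n t - F n q) + (F n q - e q)) + norm (e q - e t)"
      by (rule norm_triangle_ineq)
    also have "\<dots> \<le> norm (F n t - F n q) + norm (F n q - e q) + norm (e q - e t)"
      by (intro add_right_mono norm_triangle_ineq)
    finally have "norm (F n t - e t) \<le> norm (F n t - F n q) + norm (F n q - e q) + norm (e q - e t)" .
    moreover have "norm (F n t - F n q) \<le> r / 3" using elim(2) near(2) order_trans by blast
    moreover have "norm (e q - e t) < r / 3" using d(2)[of q] near(1) by (simp add: dist_norm)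
    ultimately show ?case using elim(1) by linarith
  qed
  then show "\<exists>no. \<forall>n\<ge>no. norm (F n t - e t) < r" by (simp add: eventually_sequentially)
qed

text \<open>The probability on \<open>{1..n+1}\<close> with weights proportional to \<open>1/k\<close>, and its image
  \<open>log_empirical x n\<close> under a sequence \<open>x\<close>: integrals against it are harmonic averages.\<close>
definition log_weights :: "nat \<Rightarrow> nat pmf" where
  "log_weights n = embed_pmf (\<lambda>k. if k \<in> {1..Suc n} then (1 / real k) / harm (Suc n) else 0)"

definition log_empirical :: "(nat \<Rightarrow> real) \<Rightarrow> nat \<Rightarrow> real measure" where
  "log_empirical x n = distr (measure_pmf (log_weights n)) borel x"

lemma log_weights_sum_1: "(\<Sum>k\<in>{1..Suc n}. (1 / real k) / harm (Suc n)) = 1"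
proof -
  have "(\<Sum>k\<in>{1..Suc n}. (1 / real k) / harm (Suc n)) = (\<Sum>k\<in>{1..Suc n}. 1 / real k) / harm (Suc n)"
    by (rule sum_divide_distrib[symmetric])
  also have "(\<Sum>k\<in>{1..Suc n}. 1 / real k) = harm (Suc n)"
    unfolding harm_def by (simp add: inverse_eq_divide del: sum.cl_ivl_Suc)
  also have "harm (Suc n) / harm (Suc n) = (1 :: real)"
    using harm_pos[of "Suc n", where 'a=real] by (simp del: harm_pos_iff)
  finally show ?thesis .
qed

lemma pmf_log_weights:
  "pmf (log_weights n) k = (if k \<in> {1..Suc n} then (1 / real k) / harm (Suc n) else 0)"
  unfolding log_weights_def
proof (rule pmf_embed_pmf)
  show "0 \<le> (if k \<in> {1..Suc n} then (1 / real k) / harm (Suc n) else 0)" for k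
    by (simp add: harm_nonneg)
  have "(\<Sum>k\<in>{1..Suc n}. ennreal ((1 / real k) / harm (Suc n)))
      = ennreal (\<Sum>k\<in>{1..Suc n}. (1 / real k) / harm (Suc n))"
    by (rule sum_ennreal) (simp add: harm_nonneg)
  with log_weights_sum_1[of n] have "(\<Sum>k\<in>{1..Suc n}. ennreal ((1 / real k) / harm (Suc n))) = 1"
    by simp
  then show "(\<integral>\<^sup>+ k. ennreal (if k \<in> {1..Suc n} then (1 / real k) / harm (Suc n) else 0)
      \<partial>count_space UNIV) = 1"
    by (subst nn_integral_count_space'[of "{1..Suc n}"]) auto
qed

lemma real_distribution_log_empirical: "real_distribution (log_empirical x n)"
  unfolding log_empirical_def
  by (rule prob_space.real_distribution_distr) (auto simp: measure_pmf.prob_space_axioms)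

lemma integral_log_empirical:
  fixes f :: "real \<Rightarrow> 'b::{banach, second_countable_topology}"
  assumes [measurable]: "f \<in> borel_measurable borel"
  shows "integral\<^sup>L (log_empirical x n) f
       = (\<Sum>k\<in>{1..Suc n}. ((1 / real k) / harm (Suc n)) *\<^sub>R f (x k))"
proof -
  have "integral\<^sup>L (log_empirical x n) f = integral\<^sup>L (measure_pmf (log_weights n)) (\<lambda>k. f (x k))"
    unfolding log_empirical_def by (rule integral_distr) auto
  also have "\<dots> = (\<Sum>k\<in>{1..Suc n}. pmf (log_weights n) k *\<^sub>R f (x k))"
    by (rule integral_measure_pmf) (auto simp: set_pmf_eq pmf_log_weights split: if_splits)
  finally show ?thesis by (simp add: pmf_log_weights)
qed

lemma integral_log_empirical_real:
  fixes f :: "real \<Rightarrow> real"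
  assumes "f \<in> borel_measurable borel"
  shows "integral\<^sup>L (log_empirical x n) f = harmonic_average (\<lambda>k. f (x k)) (Suc n)"
  unfolding integral_log_empirical[OF assms] harmonic_average_def
  by (simp add: sum_divide_distrib del: sum.cl_ivl_Suc)

lemma char_log_empirical:
  "char (log_empirical x n) t = Complex (harmonic_average (\<lambda>k. cos (t * x k)) (Suc n))
                                        (harmonic_average (\<lambda>k. sin (t * x k)) (Suc n))"
proof -
  have "char (log_empirical x n) t
      = (\<Sum>k\<in>{1..Suc n}. ((1 / real k) / harm (Suc n)) *\<^sub>R iexp (t * x k))"
    unfolding char_def by (rule integral_log_empirical) simp
  then show ?thesis
    by (simp add: complex_eq_iff Re_exp Im_exp scaleR_conv_of_real harmonic_average_def
        sum_divide_distrib del: sum.cl_ivl_Suc)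
qed

text \<open>The characteristic function of \<open>log_empirical x n\<close> is Lipschitz with constant
  \<open>1 + (harmonic average of x k ^ 2)\<close>, since \<open>|e^{i a} - e^{i b}| \<le> |a - b|\<close> and
  \<open>|y| \<le> 1 + y^2\<close>.\<close>
lemma char_log_empirical_lipschitz:
  "norm (char (log_empirical x n) t - char (log_empirical x n) q)
     \<le> \<bar>t - q\<bar> * (1 + harmonic_average (\<lambda>k. (x k)^2) (Suc n))"
proof -
  define w where "w k = (1 / real k) / harm (Suc n)" for k
  have w_nonneg: "0 \<le> w k" for k unfolding w_def by (simp add: harm_nonneg)
  have w_sum: "(\<Sum>k\<in>{1..Suc n}. w k) = 1" unfolding w_def by (rule log_weights_sum_1)
  have iexp_diff: "norm (iexp a - iexp b) \<le> \<bar>a - b\<bar>" for a b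
  proof -
    have "iexp a - iexp b = iexp b * (iexp (a - b) - 1)"
      by (simp add: algebra_simps flip: exp_add)
    then have "norm (iexp a - iexp b) = norm (iexp (a - b) - 1)" by (simp add: norm_mult)
    then show ?thesis using iexp_approx1[of "a - b" 0] by simp
  qed
  have abs_le: "\<bar>y\<bar> \<le> 1 + y^2" for y :: real
  proof (cases "\<bar>y\<bar> \<le> 1")
    case False
    then have "\<bar>y\<bar> * 1 \<le> \<bar>y\<bar> * \<bar>y\<bar>" by (intro mult_left_mono) auto
    then show ?thesis by (simp add: power2_eq_square abs_mult_self)
  qed (simp add: add_increasing2)
  have "char (log_empirical x n) t - char (log_empirical x n) q
      = (\<Sum>k\<in>{1..Suc n}. w k *\<^sub>R (iexp (t * x k) - iexp (q * x k)))"
    unfolding char_def w_def by (simp add: integral_log_empirical scaleR_diff_right sum_subtractf)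
  then have "norm (char (log_empirical x n) t - char (log_empirical x n) q)
      \<le> (\<Sum>k\<in>{1..Suc n}. w k * (\<bar>t - q\<bar> * (1 + (x k)^2)))"
  proof (simp only:, intro order_trans[OF norm_sum] sum_mono)
    fix k
    have "norm (iexp (t * x k) - iexp (q * x k)) \<le> \<bar>t - q\<bar> * \<bar>x k\<bar>"
      using iexp_diff[of "t * x k" "q * x k"] by (simp add: abs_mult flip: left_diff_distrib)
    also have "\<dots> \<le> \<bar>t - q\<bar> * (1 + (x k)^2)" by (intro mult_left_mono abs_le) auto
    finally show "norm (w k *\<^sub>R (iexp (t * x k) - iexp (q * x k))) \<le> w k * (\<bar>t - q\<bar> * (1 + (x k)^2))"
      using w_nonneg[of k] by (simp add: mult_left_mono)
  qed
  also have "\<dots> = \<bar>t - q\<bar> * ((\<Sum>k\<in>{1..Suc n}. w k) + (\<Sum>k\<in>{1..Suc n}. w k * (x k)^2))"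
    by (simp add: sum_distrib_left sum.distrib algebra_simps)
  also have "(\<Sum>k\<in>{1..Suc n}. w k * (x k)^2) = harmonic_average (\<lambda>k. (x k)^2) (Suc n)"
    unfolding w_def harmonic_average_def by (simp add: sum_divide_distrib del: sum.cl_ivl_Suc)
  finally show ?thesis using w_sum by simp
qed

text \<open>The second moments make the
  characteristic functions of \<open>log_empirical x n\<close> equi-Lipschitz, so they converge everywhere,
  and L\'evy's continuity theorem gives weak convergence.\<close>
lemma log_average_weak_convergence:
  fixes x :: "nat \<Rightarrow> real" and \<phi> :: "real \<Rightarrow> real"
  assumes cos: "\<And>t. t \<in> \<rat> \<Longrightarrow> log_average (\<lambda>k. cos (t * x k)) \<longlonglongrightarrow> exp (- (t^2) / 2)"
    and sin: "\<And>t. t \<in> \<rat> \<Longrightarrow> log_average (\<lambda>k. sin (t * x k)) \<longlonglongrightarrow> 0"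
    and sq: "log_average (\<lambda>k. (x k)^2) \<longlonglongrightarrow> 1"
    and cont: "continuous_on UNIV \<phi>" and bdd: "bounded (range \<phi>)"
  shows "log_average (\<lambda>k. \<phi> (x k)) \<longlonglongrightarrow> integral\<^sup>L std_normal_distribution \<phi>"
proof -
  define \<mu> where "\<mu> = log_empirical x"
  note \<mu>_distr = real_distribution_log_empirical[of x, folded \<mu>_def]
  have harm_Suc: "(\<lambda>n. harmonic_average f (Suc n)) \<longlonglongrightarrow> L" if "log_average f \<longlonglongrightarrow> L" for f L
    using that unfolding log_average_iff_harmonic_average by (rule LIMSEQ_Suc)
  have char_\<mu>: "char (\<mu> n) t = Complex (harmonic_average (\<lambda>k. cos (t * x k)) (Suc n))
                                   (harmonic_average (\<lambda>k. sin (t * x k)) (Suc n))" for n t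
    unfolding \<mu>_def by (rule char_log_empirical)
  have char_rat: "(\<lambda>n. char (\<mu> n) q) \<longlonglongrightarrow> char std_normal_distribution q" if "q \<in> \<rat>" for q
    unfolding char_\<mu> char_std_normal_distribution
    using tendsto_Complex[OF harm_Suc[OF cos[OF that]] harm_Suc[OF sin[OF that]]]
    by (simp add: complex_of_real_def)
  have "eventually (\<lambda>n. harmonic_average (\<lambda>k. (x k)^2) (Suc n) < 2) sequentially"
    using harm_Suc[OF sq] by (rule order_tendstoD) simp
  then have lipschitz: "eventually (\<lambda>n. \<forall>s u. norm (char (\<mu> n) s - char (\<mu> n) u) \<le> 3 * \<bar>s - u\<bar>)
      sequentially"
  proof eventually_elim
    case (elim n)
    show ?case
    proof (intro allI)
      fix s u
      have "norm (char (\<mu> n) s - char (\<mu> n) u)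
          \<le> \<bar>s - u\<bar> * (1 + harmonic_average (\<lambda>k. (x k)^2) (Suc n))"
        unfolding \<mu>_def by (rule char_log_empirical_lipschitz)
      also have "\<dots> \<le> \<bar>s - u\<bar> * 3" using elim by (intro mult_left_mono) auto
      finally show "norm (char (\<mu> n) s - char (\<mu> n) u) \<le> 3 * \<bar>s - u\<bar>" by (simp add: mult.commute)
    qed
  qed
  have "(\<lambda>n. char (\<mu> n) t) \<longlonglongrightarrow> char std_normal_distribution t" for t
    by (rule tendsto_from_rationals_lipschitz[OF char_rat _ lipschitz])
      (auto simp: char_std_normal_distribution intro!: continuous_intros)
  then have weak: "weak_conv_m \<mu> std_normal_distribution"
    by (rule levy_continuity[OF \<mu>_distr real_dist_normal_dist])
  obtain b where b: "\<And>y. norm (\<phi> y) \<le> b" using bdd unfolding bounded_iff by auto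
  have "\<And>y. isCont \<phi> y" using cont by (simp add: continuous_on_eq_continuous_at)
  from weak_conv_imp_integral_bdd_continuous_conv[OF \<mu>_distr real_dist_normal_dist weak this b]
  have "(\<lambda>n. integral\<^sup>L (\<mu> n) \<phi>) \<longlonglongrightarrow> integral\<^sup>L std_normal_distribution \<phi>" .
  moreover have "integral\<^sup>L (\<mu> n) \<phi> = harmonic_average (\<lambda>k. \<phi> (x k)) (Suc n)" for n
    unfolding \<mu>_def using cont by (intro integral_log_empirical_real borel_measurable_continuous_onI)
  ultimately have "(\<lambda>n. harmonic_average (\<lambda>k. \<phi> (x k)) (Suc n))
      \<longlonglongrightarrow> integral\<^sup>L std_normal_distribution \<phi>"
    by (simp only:)
  then show ?thesis
    unfolding log_average_iff_harmonic_average by (rule LIMSEQ_imp_Suc)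
qed

subsection \<open>The normalized fractional Brownian motion\<close>

text \<open>Covariance of shifted cosines of two standard Gaussians with correlation \<open>r\<close> (see
  \<open>shifted_cos_covariance\<close>): for \<open>0 \<le> r \<le> 2 \<rho> \<le> 2\<close> it is \<open>O(\<rho>)\<close>, uniformly in the phase.\<close>
lemma cos_covariance_bound:
  fixes t r \<rho> c :: real
  assumes r: "0 \<le> r" "r \<le> 2 * \<rho>" "\<rho> \<le> 1" and c: "\<bar>c\<bar> \<le> 1"
  shows "\<bar>exp (- (t^2)) * (c * (exp (- (t^2 * r)) - 1) + (exp (t^2 * r) - 1)) / 2\<bar>
           \<le> 2 * t^2 * exp (2 * t^2) * \<rho>"
proof -
  define u where "u = t^2 * r"
  have u: "0 \<le> u" "u \<le> t^2 * (2 * \<rho>)" unfolding u_def using r by (auto intro: mult_left_mono)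
  moreover have "t^2 * (2 * \<rho>) \<le> t^2 * 2" using r by (intro mult_left_mono) auto
  ultimately have u_le: "u \<le> 2 * t^2" by linarith
  have minus: "\<bar>exp (- u) - 1\<bar> \<le> u * exp (2 * t^2)"
  proof -
    have "\<bar>exp (- u) - 1\<bar> \<le> u" using exp_ge_add_one_self[of "- u"] u by simp
    also have "\<dots> \<le> u * exp (2 * t^2)" using mult_left_mono[of 1 "exp (2 * t^2)" u] u by simp
    finally show ?thesis .
  qed
  have plus: "\<bar>exp u - 1\<bar> \<le> u * exp (2 * t^2)"
  proof -
    have "exp u * (1 - u) \<le> exp u * exp (- u)"
      using exp_ge_add_one_self[of "- u"] by (intro mult_left_mono) auto
    then have "\<bar>exp u - 1\<bar> \<le> u * exp u" using u by (simp add: exp_minus algebra_simps)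
    also have "\<dots> \<le> u * exp (2 * t^2)" using u u_le by (intro mult_left_mono) auto
    finally show ?thesis .
  qed
  have "\<bar>c * (exp (- u) - 1)\<bar> \<le> 1 * (u * exp (2 * t^2))"
    unfolding abs_mult using minus c by (intro mult_mono) auto
  then have "\<bar>c * (exp (- u) - 1) + (exp u - 1)\<bar> \<le> 2 * (u * exp (2 * t^2))"
    using abs_triangle_ineq[of "c * (exp (- u) - 1)" "exp u - 1"] plus by linarith
  moreover have "exp (- (t^2)) \<le> 1" by simp
  ultimately have "\<bar>exp (- (t^2)) * (c * (exp (- u) - 1) + (exp u - 1))\<bar> \<le> 1 * (2 * (u * exp (2 * t^2)))"
    unfolding abs_mult by (intro mult_mono) auto
  moreover have "u * exp (2 * t^2) \<le> t^2 * (2 * \<rho>) * exp (2 * t^2)"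
    using u by (intro mult_right_mono) auto
  ultimately show ?thesis unfolding u_def by (simp add: algebra_simps)
qed

locale fractional_brownian_motion =
  fixes M :: "'a measure" and H :: real and B :: "real \<Rightarrow> 'a \<Rightarrow> real"
  assumes fbm: "fbm M H B"
begin

sublocale prob_space M
  using fbm unfolding fbm_def centered_gaussian_process_def by simp

lemma Hurst_bounds: "0 < H" "H < 1"
  using fbm unfolding fbm_def by auto

lemma B_measurable [measurable]: "0 \<le> t \<Longrightarrow> B t \<in> borel_measurable M"
  and B_integrable: "0 \<le> t \<Longrightarrow> integrable M (B t)"
  and B_mean: "0 \<le> t \<Longrightarrow> expectation (B t) = 0"
  and B_gaussian: "finite I \<Longrightarrow> I \<subseteq> {0..} \<Longrightarrow> gaussian_rv M (\<lambda>\<omega>. \<Sum>t\<in>I. c t * B t \<omega>)"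
  and B_cov: "0 \<le> t \<Longrightarrow> 0 \<le> s \<Longrightarrow> expectation (\<lambda>\<omega>. B t \<omega> * B s \<omega>) = fbm_cov H t s"
  using fbm unfolding fbm_def centered_gaussian_process_def fbm_cov_def by auto

text \<open>Products \<open>B_t B_s\<close> are integrable since each \<open>B_t\<close> is Gaussian, hence square integrable.\<close>
lemma B_product_integrable:
  assumes "0 \<le> t" "0 \<le> s" shows "integrable M (\<lambda>\<omega>. B t \<omega> * B s \<omega>)"
proof -
  have square: "integrable M (\<lambda>\<omega>. B u \<omega> ^ 2)" if "0 \<le> u" for u
    using centered_gaussian_moments(1)[OF prob_space_axioms _ B_integrable[OF that] B_mean[OF that]]
      B_gaussian[of "{u}" "\<lambda>_. 1"] that by simp
  show ?thesis
  proof (rule Bochner_Integration.integrable_bound)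
    show "integrable M (\<lambda>\<omega>. B t \<omega> ^ 2 + B s \<omega> ^ 2)" using square assms by auto
    have "norm (B t \<omega> * B s \<omega>) \<le> norm (B t \<omega> ^ 2 + B s \<omega> ^ 2)" for \<omega>
    proof -
      have "2 * \<bar>B t \<omega>\<bar> * \<bar>B s \<omega>\<bar> \<le> \<bar>B t \<omega>\<bar>^2 + \<bar>B s \<omega>\<bar>^2" by (rule sum_squares_bound)
      moreover have "norm (B t \<omega> ^ 2 + B s \<omega> ^ 2) = \<bar>B t \<omega>\<bar>^2 + \<bar>B s \<omega>\<bar>^2" by simp
      moreover have "norm (B t \<omega> * B s \<omega>) = \<bar>B t \<omega>\<bar> * \<bar>B s \<omega>\<bar>" by (simp add: abs_mult)
      moreover have "0 \<le> \<bar>B t \<omega>\<bar> * \<bar>B s \<omega>\<bar>" by simp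
      ultimately show ?thesis by linarith
    qed
    then show "AE \<omega> in M. norm (B t \<omega> * B s \<omega>) \<le> norm (B t \<omega> ^ 2 + B s \<omega> ^ 2)" by simp
  qed (use assms in measurable)
qed

definition X :: "nat \<Rightarrow> 'a \<Rightarrow> real" where
  "X k \<omega> = B (real k) \<omega> / real k powr H"

definition corr :: "nat \<Rightarrow> nat \<Rightarrow> real" where
  "corr j k = fbm_cov H (real j) (real k) / (real j powr H * real k powr H)"

abbreviation \<gamma> :: real where "\<gamma> \<equiv> min H (1 - H)"

lemma \<gamma>_bounds: "0 < \<gamma>" "\<gamma> \<le> 1"
  using Hurst_bounds by auto

lemma X_measurable [measurable]: "X k \<in> borel_measurable M"
proof -
  have [measurable]: "B (real k) \<in> borel_measurable M" by (rule B_measurable) simp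
  show ?thesis unfolding X_def by measurable
qed

lemma corr_diag: "1 \<le> k \<Longrightarrow> corr k k = 1"
  by (simp add: corr_def fbm_cov_def flip: powr_add)

lemma corr_bounds: "1 \<le> j \<Longrightarrow> 1 \<le> k \<Longrightarrow> 0 \<le> corr j k \<and> corr j k \<le> 2 * decay \<gamma> j k"
  using fbm_corr_bounds[OF Hurst_bounds] unfolding corr_def by blast

lemma X_combination:
  assumes jk: "1 \<le> j" "1 \<le> k"
  shows "gaussian_rv M (\<lambda>\<omega>. a * X j \<omega> + b * X k \<omega>)"
    and "integrable M (\<lambda>\<omega>. a * X j \<omega> + b * X k \<omega>)"
    and "expectation (\<lambda>\<omega>. a * X j \<omega> + b * X k \<omega>) = 0"
    and "expectation (\<lambda>\<omega>. (a * X j \<omega> + b * X k \<omega>)^2) = a^2 + b^2 + 2 * a * b * corr j k"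
proof -
  define c where "c u = (if u = real j then a / real j powr H else 0)
                      + (if u = real k then b / real k powr H else 0)" for u
  have "(\<Sum>u\<in>{real j, real k}. c u * B u \<omega>) = a * X j \<omega> + b * X k \<omega>" for \<omega>
    by (cases "j = k") (simp_all add: c_def X_def field_simps)
  moreover have "gaussian_rv M (\<lambda>\<omega>. \<Sum>u\<in>{real j, real k}. c u * B u \<omega>)"
    by (intro B_gaussian) auto
  ultimately show "gaussian_rv M (\<lambda>\<omega>. a * X j \<omega> + b * X k \<omega>)" by simp
  have X_int: "integrable M (X i)" and X_mean: "expectation (X i) = 0" for i
    unfolding X_def using B_integrable[of "real i"] B_mean[of "real i"] by auto
  show "integrable M (\<lambda>\<omega>. a * X j \<omega> + b * X k \<omega>)"
    and "expectation (\<lambda>\<omega>. a * X j \<omega> + b * X k \<omega>) = 0"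
    using X_int X_mean by auto
  have prod: "integrable M (\<lambda>\<omega>. X i \<omega> * X l \<omega>) \<and> expectation (\<lambda>\<omega>. X i \<omega> * X l \<omega>) = corr i l"
    for i l
    using B_product_integrable[of "real i" "real l"] B_cov[of "real i" "real l"]
    by (simp add: X_def corr_def)
  have "(a * X j \<omega> + b * X k \<omega>)^2
      = a^2 * (X j \<omega> * X j \<omega>) + b^2 * (X k \<omega> * X k \<omega>) + 2 * a * b * (X j \<omega> * X k \<omega>)" for \<omega>
    by (simp add: power2_eq_square algebra_simps)
  then show "expectation (\<lambda>\<omega>. (a * X j \<omega> + b * X k \<omega>)^2) = a^2 + b^2 + 2 * a * b * corr j k"
    using prod[of j j] prod[of k k] prod[of j k] corr_diag jk by simp
qed

lemma expectation_cos_combination: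
  assumes "1 \<le> j" "1 \<le> k"
  shows "expectation (\<lambda>\<omega>. cos (a * X j \<omega> + b * X k \<omega> + \<theta>))
           = cos \<theta> * exp (- (a^2 + b^2 + 2 * a * b * corr j k) / 2)"
  using centered_gaussian_cos_shift[OF prob_space_axioms X_combination(1-3)[OF assms]]
  by (simp add: X_combination(4)[OF assms])

lemma fourth_moment_combination:
  assumes "1 \<le> j" "1 \<le> k"
  shows "integrable M (\<lambda>\<omega>. (a * X j \<omega> + b * X k \<omega>)^4)"
    and "expectation (\<lambda>\<omega>. (a * X j \<omega> + b * X k \<omega>)^4) = 3 * (a^2 + b^2 + 2 * a * b * corr j k)^2"
  using centered_gaussian_moments(2,3)[OF prob_space_axioms X_combination(1-3)[OF assms]]
  by (simp_all add: X_combination(4)[OF assms])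

text \<open>The mixed moment of \<open>1 + cos (t X_j + \<theta>)\<close> and \<open>1 + cos (t X_k + \<theta>)\<close>: by the
  product formula for cosines it reduces to expectations \<open>E cos (a X_j + b X_k + \<theta>')\<close>, which
  are known in closed form.\<close>
lemma shifted_cos_product:
  assumes jk: "1 \<le> j" "1 \<le> k"
  shows "integrable M (\<lambda>\<omega>. (1 + cos (t * X j \<omega> + \<theta>)) * (1 + cos (t * X k \<omega> + \<theta>)))"
    and "expectation (\<lambda>\<omega>. (1 + cos (t * X j \<omega> + \<theta>)) * (1 + cos (t * X k \<omega> + \<theta>)))
      = 1 + 2 * (cos \<theta> * exp (- (t^2) / 2))
        + (exp (- (t^2)) * exp (t^2 * corr j k)
           + cos (2 * \<theta>) * (exp (- (t^2)) * exp (- (t^2 * corr j k)))) / 2"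
proof -
  have expand: "(1 + cos (t * X j \<omega> + \<theta>)) * (1 + cos (t * X k \<omega> + \<theta>))
      = 1 + cos (t * X j \<omega> + \<theta>) + cos (t * X k \<omega> + \<theta>)
        + (cos (t * X j \<omega> + (- t) * X k \<omega> + 0) + cos (t * X j \<omega> + t * X k \<omega> + 2 * \<theta>)) / 2" for \<omega>
  proof -
    have "cos (t * X j \<omega> + \<theta>) * cos (t * X k \<omega> + \<theta>)
        = (cos (t * X j \<omega> + (- t) * X k \<omega> + 0) + cos (t * X j \<omega> + t * X k \<omega> + 2 * \<theta>)) / 2"
      unfolding cos_times_cos by (simp add: algebra_simps mult_2)
    then show ?thesis by (simp add: algebra_simps)
  qed
  have ints: "integrable M (\<lambda>\<omega>. cos (t * X j \<omega> + \<theta>))" "integrable M (\<lambda>\<omega>. cos (t * X k \<omega> + \<theta>))"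
    "integrable M (\<lambda>\<omega>. cos (t * X j \<omega> + (- t) * X k \<omega> + 0))"
    "integrable M (\<lambda>\<omega>. cos (t * X j \<omega> + t * X k \<omega> + 2 * \<theta>))"
    by (intro integrable_cos_sin; measurable)+
  then show "integrable M (\<lambda>\<omega>. (1 + cos (t * X j \<omega> + \<theta>)) * (1 + cos (t * X k \<omega> + \<theta>)))"
    unfolding expand by simp
  have single: "expectation (\<lambda>\<omega>. cos (t * X i \<omega> + \<theta>)) = cos \<theta> * exp (- (t^2) / 2)" if "1 \<le> i" for i
    using expectation_cos_combination[OF that that, of t 0 \<theta>] by simp
  have minus: "expectation (\<lambda>\<omega>. cos (t * X j \<omega> + (- t) * X k \<omega> + 0))
      = exp (- (t^2)) * exp (t^2 * corr j k)"
  proof -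
    have "- (t^2 + (- t)^2 + 2 * t * (- t) * corr j k) / 2 = - (t^2) + t^2 * corr j k"
      by (simp add: field_simps power2_eq_square)
    then show ?thesis using expectation_cos_combination[OF jk, of t "- t" 0] by (simp flip: exp_add)
  qed
  have plus: "expectation (\<lambda>\<omega>. cos (t * X j \<omega> + t * X k \<omega> + 2 * \<theta>))
      = cos (2 * \<theta>) * (exp (- (t^2)) * exp (- (t^2 * corr j k)))"
  proof -
    have "- (t^2 + t^2 + 2 * t * t * corr j k) / 2 = - (t^2) + - (t^2 * corr j k)"
      by (simp add: field_simps power2_eq_square)
    then show ?thesis using expectation_cos_combination[OF jk, of t t "2 * \<theta>"] by (simp flip: exp_add)
  qed
  show "expectation (\<lambda>\<omega>. (1 + cos (t * X j \<omega> + \<theta>)) * (1 + cos (t * X k \<omega> + \<theta>)))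
      = 1 + 2 * (cos \<theta> * exp (- (t^2) / 2))
        + (exp (- (t^2)) * exp (t^2 * corr j k)
           + cos (2 * \<theta>) * (exp (- (t^2)) * exp (- (t^2 * corr j k)))) / 2"
    unfolding expand using ints single[OF jk(1)] single[OF jk(2)] minus plus
    by (simp add: prob_space)
qed

lemma shifted_cos_covariance:
  assumes jk: "1 \<le> j" "1 \<le> k"
  shows "\<bar>expectation (\<lambda>\<omega>. (1 + cos (t * X j \<omega> + \<theta>)) * (1 + cos (t * X k \<omega> + \<theta>)))
           - (1 + cos \<theta> * exp (- (t^2) / 2))^2\<bar> \<le> 2 * t^2 * exp (2 * t^2) * decay \<gamma> j k"
proof -
  have "(1 + cos \<theta> * exp (- (t^2) / 2))^2
      = 1 + 2 * (cos \<theta> * exp (- (t^2) / 2)) + (1 + cos (2 * \<theta>)) / 2 * exp (- (t^2))"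
  proof -
    have "exp (- (t^2) / 2) ^ 2 = exp (- (t^2))" by (simp add: power2_eq_square flip: exp_add)
    moreover have "(cos \<theta>)^2 = (1 + cos (2 * \<theta>)) / 2" using cos_double_cos[of \<theta>] by simp
    ultimately show ?thesis by (simp add: power2_sum power_mult_distrib)
  qed
  then have "expectation (\<lambda>\<omega>. (1 + cos (t * X j \<omega> + \<theta>)) * (1 + cos (t * X k \<omega> + \<theta>)))
           - (1 + cos \<theta> * exp (- (t^2) / 2))^2
      = exp (- (t^2)) * (cos (2 * \<theta>) * (exp (- (t^2 * corr j k)) - 1) + (exp (t^2 * corr j k) - 1)) / 2"
    unfolding shifted_cos_product(2)[OF jk] by (simp add: field_simps)
  also have "\<bar>\<dots>\<bar> \<le> 2 * t^2 * exp (2 * t^2) * decay \<gamma> j k"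
    using corr_bounds[OF jk] decay_le_1[of \<gamma> j k] \<gamma>_bounds by (intro cos_covariance_bound) auto
  finally show ?thesis .
qed

lemma log_average_shifted_cos:
  "AE \<omega> in M. log_average (\<lambda>k. 1 + cos (t * X k \<omega> + \<theta>)) \<longlonglongrightarrow> 1 + cos \<theta> * exp (- (t^2) / 2)"
proof (rule log_average_lln[where C = "2 * t^2 * exp (2 * t^2)" and g = \<gamma>])
  fix k :: nat
  have cos_int: "integrable M (\<lambda>\<omega>. cos (t * X k \<omega> + \<theta>))" by (intro integrable_cos_sin) measurable
  then show "integrable M (\<lambda>\<omega>. 1 + cos (t * X k \<omega> + \<theta>))" by simp
  show "expectation (\<lambda>\<omega>. 1 + cos (t * X k \<omega> + \<theta>)) = 1 + cos \<theta> * exp (- (t^2) / 2)" if "1 \<le> k"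
    using cos_int expectation_cos_combination[OF that that, of t 0 \<theta>] by (simp add: prob_space)
  show "0 \<le> 1 + cos (t * X k \<omega> + \<theta>)" for \<omega>
    using cos_ge_minus_one[of "t * X k \<omega> + \<theta>"] by linarith
qed (use shifted_cos_product shifted_cos_covariance \<gamma>_bounds in auto)

text \<open>Taking \<open>\<theta> = 0\<close> and \<open>\<theta> = - pi / 2\<close>, and intersecting over the countably many rational
  frequencies, gives the trigonometric hypotheses of \<open>log_average_weak_convergence\<close>.\<close>
lemma log_average_cos:
  "AE \<omega> in M. \<forall>t\<in>\<rat>. log_average (\<lambda>k. cos (t * X k \<omega>)) \<longlonglongrightarrow> exp (- (t^2) / 2)"
proof (subst AE_ball_countable[OF countable_rat], intro ballI)
  fix t :: real
  show "AE \<omega> in M. log_average (\<lambda>k. cos (t * X k \<omega>)) \<longlonglongrightarrow> exp (- (t^2) / 2)"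
    using log_average_shifted_cos[of t 0] by eventually_elim (rule log_average_add_const, simp)
qed

lemma log_average_sin:
  "AE \<omega> in M. \<forall>t\<in>\<rat>. log_average (\<lambda>k. sin (t * X k \<omega>)) \<longlonglongrightarrow> 0"
proof (subst AE_ball_countable[OF countable_rat], intro ballI)
  fix t :: real
  show "AE \<omega> in M. log_average (\<lambda>k. sin (t * X k \<omega>)) \<longlonglongrightarrow> 0"
    using log_average_shifted_cos[of t "- (pi / 2)"]
    by eventually_elim (rule log_average_add_const, simp add: cos_diff)
qed

text \<open>Almost surely, the logarithmic averages of \<open>X_k^2\<close> converge to 1.  The covariance of
  \<open>X_j^2\<close> and \<open>X_k^2\<close> is \<open>2 corr j k ^ 2\<close>, computed from fourth moments by polarization.\<close>
lemma log_average_square: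
  "AE \<omega> in M. log_average (\<lambda>k. X k \<omega> ^ 2) \<longlonglongrightarrow> 1"
proof (rule log_average_lln[where C = 8 and g = \<gamma>])
  have polarization: "u^2 * v^2 = ((u + v)^4 + (u - v)^4 - 2 * u^4 - 2 * v^4) / 12" for u v :: real
    by (simp add: field_simps eval_nat_numeral)
  fix j k :: nat assume jk: "1 \<le> j" "1 \<le> k"
  note fourth = fourth_moment_combination[OF jk, of 1 1] fourth_moment_combination[OF jk, of 1 "- 1"]
    fourth_moment_combination[OF jk(1) jk(1), of 1 0] fourth_moment_combination[OF jk(2) jk(2), of 1 0]
  show "integrable M (\<lambda>\<omega>. X j \<omega> ^ 2 * X k \<omega> ^ 2)"
    unfolding polarization using fourth by simp
  have "expectation (\<lambda>\<omega>. X j \<omega> ^ 2 * X k \<omega> ^ 2) = 1 + 2 * (corr j k)^2"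
    unfolding polarization using fourth corr_diag jk
    by (simp add: power2_eq_square field_simps)
  moreover have "2 * (corr j k)^2 \<le> 8 * decay \<gamma> j k"
  proof -
    have "corr j k * corr j k \<le> (2 * decay \<gamma> j k) * 2"
      using corr_bounds[OF jk] decay_le_1[of \<gamma> j k] \<gamma>_bounds by (intro mult_mono) auto
    then show ?thesis by (simp add: power2_eq_square)
  qed
  ultimately show "\<bar>expectation (\<lambda>\<omega>. X j \<omega> ^ 2 * X k \<omega> ^ 2) - 1^2\<bar> \<le> 8 * decay \<gamma> j k"
    by simp
next
  fix k :: nat assume k: "1 \<le> k"
  note square = centered_gaussian_moments(1)[OF prob_space_axioms X_combination(1-3)[OF k k, of 1 0]]
  show "integrable M (\<lambda>\<omega>. X k \<omega> ^ 2)" using square by simp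
  show "expectation (\<lambda>\<omega>. X k \<omega> ^ 2) = 1" using X_combination(4)[OF k k, of 1 0] by simp
qed (use \<gamma>_bounds in auto)

end

text \<open>On the intersection of the three almost sure events above, the deterministic lemma
  \<open>log_average_weak_convergence\<close> applies to the path \<open>k \<mapsto> X k \<omega>\<close>.\<close>
theorem mainTheorem6:
  fixes M :: "'a measure" and H :: real and B :: "real \<Rightarrow> 'a \<Rightarrow> real"
  assumes "fbm M H B"
  shows "AE \<omega> in M. \<forall>\<phi> :: real \<Rightarrow> real. continuous_on UNIV \<phi> \<longrightarrow> bounded (range \<phi>) \<longrightarrow>
           (\<lambda>n::nat. (1 / ln (real n)) * (\<Sum>k=1..n. (1 / real k) * \<phi> (B (real k) \<omega> / real k powr H)))
             \<longlonglongrightarrow> integral\<^sup>L (density lborel std_normal_density) \<phi>"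
proof -
  interpret fractional_brownian_motion M H B by unfold_locales (rule assms)
  show ?thesis
    using log_average_cos log_average_sin log_average_square
  proof eventually_elim
    case (elim \<omega>)
    then show ?case
      using log_average_weak_convergence[of "\<lambda>k. X k \<omega>"] unfolding log_average_def X_def by blast
  qed
qed

end
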